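(* Let $x_s<x_t$ be integers, let $C\ge 0$, and let $f:[x_s,x_t]\to\mathbb{R}$ be such that $([x_s,x_t],f)$ is an Ameso($C$) pair. If there exist $x'\in[x_s,x_t]$ and $z\in(x',x_t]$ with $f(z)-f(x')\ge C$, then $\min_{y\in[x_s,z]}f(y)=\min_{y\in[x_s,x_t]}f(y)$.
   Context: For integers $a\le b$, $[a,b]$ denotes the set of integers $\{a,\dots,b\}$ and $(a,b]$ the set $\{a+1,\dots,b\}$. Floors and ceilings of vectors are taken componentwise. A set $D^n\subseteq\mathbb{Z}^n$ is an Ameso set if $\lceil(\vec x+\vec y)/2\rceil,\lfloor(\vec x+\vec y)/2\rfloor\in D^n$ for all $\vec x,\vec y\in D^n$. For $C\ge 0$, $(D^n,f)$ is an Ameso($C$) pair if $D^n$ is an Ameso set, $f:D^n\to\mathbb{R}$ is bounded below, and $f(\vec x)+f(\vec y)+C\ge f(\lceil(\vec x+\vec y)/2\rceil)+f(\lfloor(\vec x+\vec y)/2\rfloor)$ for all $\vec x,\vec y\in D^n$. *)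

theory Defs
  imports Main Complex_Main
begin

definition mid_ceil :: "int \<Rightarrow> int \<Rightarrow> int" where
  "mid_ceil x y = \<lceil>(real_of_int x + real_of_int y) / 2\<rceil>"

definition mid_floor :: "int \<Rightarrow> int \<Rightarrow> int" where
  "mid_floor x y = \<lfloor>(real_of_int x + real_of_int y) / 2\<rfloor>"

definition ameso_set :: "int set \<Rightarrow> bool" where
  "ameso_set D \<longleftrightarrow> (\<forall>x\<in>D. \<forall>y\<in>D. mid_ceil x y \<in> D \<and> mid_floor x y \<in> D)"

definition ameso_pair :: "real \<Rightarrow> int set \<Rightarrow> (int \<Rightarrow> real) \<Rightarrow> bool" where
  "ameso_pair C D f \<longleftrightarrow> C \<ge> 0 \<and> ameso_set D \<and> bdd_below (f ` D) \<and>
     (\<forall>x\<in>D. \<forall>y\<in>D. f x + f y + C \<ge> f (mid_ceil x y) + f (mid_floor x y))"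

end

theory Submission
  imports Defs
begin

(* If some y > z had f y < f x', then z would be a point of (x', y) lying more than C above y
   and at least C above x'. Let m be the rightmost maximiser of f on (x', y) and reflect the
   endpoint nearer to m through m: the Ameso inequality for this symmetric pair, whose two
   midpoints both equal m, yields either a point right of m with value f m, or a point of
   [x', m) whose value exceeds f m, both impossible. Hence f \<ge> f x' on (z, xt], so the
   minimum over [xs, xt] is already attained on [xs, z]. *)

lemma mid_ceil_reflect: "mid_ceil (m - d) (m + d) = m"
  and mid_floor_reflect: "mid_floor (m - d) (m + d) = m"
proof -
  have "(real_of_int (m - d) + real_of_int (m + d)) / 2 = real_of_int m" by simp
  then show "mid_ceil (m - d) (m + d) = m" "mid_floor (m - d) (m + d) = m"
    unfolding mid_ceil_def mid_floor_def by simp_all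
qed

lemma ameso_pair_reflect_ineq:
  assumes "ameso_pair C D f" and "m - d \<in> D" and "m + d \<in> D"
  shows "2 * f m \<le> f (m - d) + f (m + d) + C"
  using assms unfolding ameso_pair_def
  by (metis mid_ceil_reflect mid_floor_reflect mult_2)

lemma finite_rightmost_maximizer:
  fixes f :: "'a::linorder \<Rightarrow> 'b::linorder"
  assumes "finite S" and "S \<noteq> {}"
  obtains m where "m \<in> S" and "\<And>x. x \<in> S \<Longrightarrow> f x \<le> f m"
    and "\<And>x. x \<in> S \<Longrightarrow> f x = f m \<Longrightarrow> x \<le> m"
proof -
  define T where "T = {x \<in> S. f x = Max (f ` S)}"
  have "Max (f ` S) \<in> f ` S" using assms by simp
  then have "finite T" "T \<noteq> {}" using assms(1) by (auto simp: T_def)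
  then have "Max T \<in> T" by simp
  then show thesis
    using assms \<open>finite T\<close> by (intro that[of "Max T"]) (auto simp: T_def)
qed

lemma ameso_pair_no_peak:
  fixes f :: "int \<Rightarrow> real"
  assumes amp: "ameso_pair C D f" and D: "{a..y} \<subseteq> D" and "a < z" "z < y"
    and left: "f a + C \<le> f z" and right: "f y + C < f z"
  shows False
proof -
  have C: "C \<ge> 0" using amp by (simp add: ameso_pair_def)
  have "finite {a<..<y}" "z \<in> {a<..<y}" using \<open>a < z\<close> \<open>z < y\<close> by auto
  then obtain m where m: "m \<in> {a<..<y}"
    and le_m: "\<And>x. x \<in> {a<..<y} \<Longrightarrow> f x \<le> f m"
    and rightmost: "\<And>x. x \<in> {a<..<y} \<Longrightarrow> f x = f m \<Longrightarrow> x \<le> m"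
    using finite_rightmost_maximizer[of "{a<..<y}" f] by blast
  have "f z \<le> f m" using le_m \<open>z \<in> {a<..<y}\<close> .
  show False
  proof (cases "m - a < y - m")
    case True
    define d where "d = m - a"
    have w: "m + d \<in> {a<..<y}" using True m by (auto simp: d_def)
    have "2 * f m \<le> f (m - d) + f (m + d) + C"
      using w m D by (intro ameso_pair_reflect_ineq[OF amp]) (auto simp: d_def)
    then have "f (m + d) = f m"
      using left \<open>f z \<le> f m\<close> le_m[OF w] by (simp add: d_def)
    then show False using rightmost[OF w] m by (simp add: d_def)
  next
    case False
    define d where "d = y - m"
    have w: "m - d \<in> {a..<m}" using False m by (auto simp: d_def)
    have "2 * f m \<le> f (m - d) + f (m + d) + C"
      using w m D by (intro ameso_pair_reflect_ineq[OF amp]) (auto simp: d_def)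
    then have "f (m - d) > f m"
      using right \<open>f z \<le> f m\<close> C by (simp add: d_def)
    moreover have "f (m - d) \<le> f m"
    proof (cases "m - d = a")
      case True
      then show ?thesis using left C \<open>f z \<le> f m\<close> by simp
    next
      case False
      then show ?thesis using w m by (intro le_m) auto
    qed
    ultimately show False by simp
  qed
qed

lemma Min_image_eq_if_ge_outside:
  assumes "finite B" and "A \<subseteq> B" and "a \<in> A"
    and "\<And>y. y \<in> B - A \<Longrightarrow> f a \<le> f y"
  shows "Min (f ` A) = Min (f ` B)"
proof (rule antisym)
  have "finite A" using assms(1,2) by (rule rev_finite_subset)
  then have "Min (f ` A) \<le> f y" if "y \<in> B" for y
    using assms(3) assms(4)[of y] that by (cases "y \<in> A") (auto intro: order_trans[OF Min_le])
  then show "Min (f ` A) \<le> Min (f ` B)"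
    using assms(1,2,3) by (subst Min_ge_iff) auto
  show "Min (f ` B) \<le> Min (f ` A)"
    using assms by (intro Min_antimono) auto
qed

theorem corollary2:
  fixes xs xt :: int and C :: real and f :: "int \<Rightarrow> real" and x' z :: int
  assumes "xs < xt" and "C \<ge> 0"
    and "ameso_pair C {xs..xt} f"
    and "x' \<in> {xs..xt}" and "z \<in> {x'<..xt}" and "f z - f x' \<ge> C"
  shows "Min (f ` {xs..z}) = Min (f ` {xs..xt})"
proof (rule Min_image_eq_if_ge_outside)
  show "{xs..z} \<subseteq> {xs..xt}" and "x' \<in> {xs..z}" using assms(4,5) by auto
  fix y assume "y \<in> {xs..xt} - {xs..z}"
  then have "{x'..y} \<subseteq> {xs..xt}" and "z < y" using assms(4) by auto
  show "f x' \<le> f y"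
  proof (rule ccontr)
    assume "\<not> f x' \<le> f y"
    then show False
      using ameso_pair_no_peak[OF assms(3) \<open>{x'..y} \<subseteq> _\<close> _ \<open>z < y\<close>] assms(5,6) by auto
  qed
qed simp

end
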